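(* Let $a=(a_2,\dots,a_k)$ be a tuple of nonnegative integers, not all zero, and let $2^p$ be the largest power of $2$ dividing all $a_i$. (1) If $\binom{|a|}{a}\equiv 1\pmod 2$, then there is a unique index $l$ such that $\binom{|a|-1}{\hat a_l}\equiv 1\pmod 2$; it is the unique index with $2^{p+1}\nmid a_l$. (2) If $\binom{|a|}{a}\equiv 0\pmod 2$ and $\binom{|a|-1}{\hat a_j}\equiv 1\pmod 2$ for some $j$, then there is a unique index $l\neq j$ with $\binom{|a|-1}{\hat a_l}\equiv 1\pmod 2$; it is the unique index other than $j$ with $2^{p+1}\nmid a_l$.
   Context: $|a|=a_2+\dots+a_k$ and $\binom{|a|}{a}=\frac{|a|!}{a_2!\cdots a_k!}$ is the multinomial coefficient. $\hat a_j=(a_2,\dots,a_j-1,\dots,a_k)$; the multinomial coefficient of a tuple with a negative entry is defined to be $0$. *)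

theory Defs
  imports Main
begin

definition multinom :: "(nat \<Rightarrow> nat) \<Rightarrow> nat set \<Rightarrow> nat" where
  "multinom a I = fact (\<Sum>i\<in>I. a i) div (\<Prod>i\<in>I. fact (a i))"

definition multinom_hat :: "(nat \<Rightarrow> nat) \<Rightarrow> nat set \<Rightarrow> nat \<Rightarrow> nat" where
  "multinom_hat a I j = (if a j = 0 then 0 else multinom (a(j := a j - 1)) I)"

end

theory Submission
  imports Defs
begin

text \<open>By Kummer's theorem for the prime 2, \<open>(m + n) choose n\<close> is odd iff \<open>m\<close> and \<open>n\<close> share no
  binary digit; splitting the multinomial coefficient into binomial ones, it is odd iff the binary
  expansions of the entries are pairwise disjoint. Subtracting 1 from an entry with lowest set bit
  \<open>t\<close> replaces bit \<open>t\<close> by the bits \<open>0, \<dots>, t - 1\<close>. Since every entry is a multiple of \<open>2 ^ p\<close>,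
  if \<open>t > p\<close> the decremented entry acquires bit \<open>p\<close> and collides with an entry having bit \<open>p\<close>,
  while if \<open>t = p\<close> the new low bits collide with nothing. In case (1) exactly one entry has bit \<open>p\<close>;
  in case (2) the only collision among the entries is at bit \<open>p\<close>, between \<open>a\<^sub>j\<close> and exactly one
  other entry \<open>a\<^sub>l\<close>, and decrementing either of them removes it.\<close>

lemma even_choose_double_odd: "even ((2 * M) choose (2 * N + 1))"
proof (cases M)
  case 0
  then show ?thesis by simp
next
  case (Suc M')
  have "2 * M * ((2 * M' + 1) choose (2 * N)) = ((2 * M) choose (2 * N + 1)) * (2 * N + 1)"
    using Suc_times_binomial_eq[of "2 * M' + 1" "2 * N"] Suc by simp
  then have "even (((2 * M) choose (2 * N + 1)) * (2 * N + 1))"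
    by (metis dvd_triv_left dvd_mult2)
  then show ?thesis by simp
qed

lemma choose_double_mod_two: "((2 * M) choose (2 * N)) mod 2 = (M choose N) mod 2"
proof (induction M arbitrary: N)
  case 0
  then show ?case by (cases N) auto
next
  case (Suc M)
  show ?case
  proof (cases N)
    case 0
    then show ?thesis by simp
  next
    case (Suc N')
    have "(2 * Suc M choose 2 * N) = (2 * M choose 2 * N') + 2 * (2 * M choose (2 * N' + 1))
        + (2 * M choose 2 * Suc N')"
      using Suc by (simp add: numeral_2_eq_2)
    then have "(2 * Suc M choose 2 * N) mod 2 = ((2 * M choose 2 * N') + (2 * M choose 2 * Suc N')) mod 2"
      by presburger
    also have "\<dots> = ((M choose N') + (M choose Suc N')) mod 2"
      using Suc.IH by (metis mod_add_cong)
    finally show ?thesis using Suc by simp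
  qed
qed

lemma choose_double_plus_one_mod_two:
  "((2 * M + 1) choose K) mod 2 = (M choose (K div 2)) mod 2"
proof (cases K)
  case 0
  then show ?thesis by simp
next
  case (Suc K')
  have pascal: "((2 * M + 1) choose K) = (2 * M choose K') + (2 * M choose K)"
    using Suc by simp
  show ?thesis
  proof (cases "even K'")
    case True
    then have "even (2 * M choose K)"
      using even_choose_double_odd[of M "K' div 2"] Suc by simp
    moreover have "(2 * M choose K') mod 2 = (M choose (K div 2)) mod 2"
      using choose_double_mod_two[of M "K' div 2"] True Suc by simp
    ultimately show ?thesis
      using pascal by presburger
  next
    case False
    then have "even (2 * M choose K')"
      using even_choose_double_odd[of M "K' div 2"] by simp
    moreover have "(2 * M choose K) mod 2 = (M choose (K div 2)) mod 2"
      using choose_double_mod_two[of M "K div 2"] False Suc by simp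
    ultimately show ?thesis
      using pascal by presburger
  qed
qed

text \<open>Lucas's theorem for the prime 2, one binary digit at a time.\<close>

lemma odd_choose_iff_half:
  "odd (M choose N) \<longleftrightarrow> \<not> (even M \<and> odd N) \<and> odd ((M div 2) choose (N div 2))"
proof (cases "even M")
  case True
  then obtain M' where M: "M = 2 * M'" by blast
  show ?thesis
  proof (cases "even N")
    case True
    then show ?thesis using M choose_double_mod_two[of M' "N div 2"] by (simp add: odd_iff_mod_2_eq_one)
  next
    case False
    then show ?thesis using M even_choose_double_odd[of M' "N div 2"] by simp
  qed
next
  case False
  then obtain M' where "M = 2 * M' + 1" using oddE by blast
  then show ?thesis using False choose_double_plus_one_mod_two[of M' N] by (simp add: odd_iff_mod_2_eq_one)
qed

lemma odd_add_choose_iff_disjoint_bits: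
  "odd ((m + n) choose n) \<longleftrightarrow> (\<forall>b. \<not> (bit m b \<and> bit n b))"
proof (induction "m + n" arbitrary: m n rule: less_induct)
  case less
  show ?case
  proof (cases "odd m \<and> odd n")
    case True
    then have "\<not> odd ((m + n) choose n)" using odd_choose_iff_half[of "m + n" n] by simp
    moreover have "bit m 0 \<and> bit n 0" using True by (simp add: bit_0)
    ultimately show ?thesis by blast
  next
    case False
    show ?thesis
    proof (cases "m + n = 0")
      case True
      then show ?thesis by simp
    next
      case nonzero: False
      have smaller: "m div 2 + n div 2 < m + n" using nonzero by linarith
      have half_sum: "(m + n) div 2 = m div 2 + n div 2" using False by (auto elim!: evenE oddE)
      have "odd ((m + n) choose n) \<longleftrightarrow> odd ((m div 2 + n div 2) choose (n div 2))"
        using odd_choose_iff_half[of "m + n" n] False by (auto simp: half_sum)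
      also have "\<dots> \<longleftrightarrow> (\<forall>b. \<not> (bit m (Suc b) \<and> bit n (Suc b)))"
        using less(1)[OF smaller] by (simp add: bit_Suc)
      also have "\<dots> \<longleftrightarrow> (\<forall>b. \<not> (bit m b \<and> bit n b))"
        using False by (metis bit_0 not0_implies_Suc)
      finally show ?thesis .
    qed
  qed
qed

lemma fact_add_eq_choose:
  "fact (m + n) = ((m + n) choose n) * fact m * (fact n :: nat)"
  using binomial_fact_lemma[of n "m + n"] by (simp add: ac_simps)

lemma fact_sum_eq_multinom_prod:
  assumes "finite I"
  shows "fact (sum a I) = multinom a I * (\<Prod>i\<in>I. fact (a i))"
proof -
  have "(\<Prod>i\<in>I. fact (a i)) dvd (fact (sum a I) :: nat)"
    using assms
  proof (induction I rule: finite_induct)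
    case empty
    then show ?case by simp
  next
    case (insert y I)
    have "fact (sum a I) * fact (a y) dvd (fact (sum a I + a y) :: nat)"
      unfolding fact_add_eq_choose[of "sum a I" "a y"] by (simp add: mult.assoc)
    with insert show ?case
      by (simp add: add.commute mult.commute) (meson dvd_refl dvd_trans mult_dvd_mono)
  qed
  then show ?thesis
    by (simp add: multinom_def)
qed

lemma multinom_insert:
  assumes "finite I" "y \<notin> I"
  shows "multinom a (insert y I) = ((sum a I + a y) choose a y) * multinom a I"
proof -
  have "multinom a (insert y I) * (\<Prod>i\<in>insert y I. fact (a i)) = fact (sum a I + a y)"
    using fact_sum_eq_multinom_prod[of "insert y I" a] assms by (simp add: add.commute)
  also have "\<dots> = ((sum a I + a y) choose a y) * multinom a I * (\<Prod>i\<in>insert y I. fact (a i))"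
    using fact_sum_eq_multinom_prod[OF assms(1), of a] assms
    unfolding fact_add_eq_choose[of "sum a I" "a y"] by (simp add: ac_simps)
  moreover have "(\<Prod>i\<in>insert y I. fact (a i)) \<noteq> (0::nat)"
    by (simp add: assms(1))
  ultimately show ?thesis
    by simp
qed

definition disjoint_bits :: "(nat \<Rightarrow> nat) \<Rightarrow> nat set \<Rightarrow> bool" where
  "disjoint_bits a I \<longleftrightarrow> (\<forall>b. \<forall>i\<in>I. \<forall>j\<in>I. bit (a i) b \<longrightarrow> bit (a j) b \<longrightarrow> i = j)"

lemma bit_sum_iff_disjoint_bits:
  assumes "finite I" "disjoint_bits a I"
  shows "bit (sum a I) b \<longleftrightarrow> (\<exists>i\<in>I. bit (a i) b)"
  using assms
proof (induction I arbitrary: b rule: finite_induct)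
  case empty
  then show ?case by simp
next
  case (insert y I)
  then have "disjoint_bits a I" by (simp add: disjoint_bits_def)
  with insert have "\<not> bit (a y) c \<or> \<not> bit (sum a I) c" for c
    unfolding disjoint_bits_def by blast
  then have "bit (a y + sum a I) b \<longleftrightarrow> bit (a y) b \<or> bit (sum a I) b"
    by (rule bit_disjunctive_add_iff)
  with insert \<open>disjoint_bits a I\<close> show ?case by simp
qed

lemma odd_multinom_iff:
  assumes "finite I"
  shows "odd (multinom a I) \<longleftrightarrow> disjoint_bits a I"
  using assms
proof (induction I rule: finite_induct)
  case empty
  then show ?case by (simp add: multinom_def disjoint_bits_def)
next
  case (insert y I)
  have "odd (multinom a (insert y I)) \<longleftrightarrow>
      (\<forall>b. \<not> (bit (sum a I) b \<and> bit (a y) b)) \<and> disjoint_bits a I"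
    using insert by (simp add: multinom_insert odd_add_choose_iff_disjoint_bits)
  also have "\<dots> \<longleftrightarrow> (\<forall>b. \<not> ((\<exists>i\<in>I. bit (a i) b) \<and> bit (a y) b)) \<and> disjoint_bits a I"
    using bit_sum_iff_disjoint_bits[OF insert(1)] by blast
  also have "\<dots> \<longleftrightarrow> disjoint_bits a (insert y I)"
    using insert(2) unfolding disjoint_bits_def by blast
  finally show ?case .
qed

lemma odd_multinom_hat_iff:
  assumes "finite I"
  shows "odd (multinom_hat a I l) \<longleftrightarrow> a l \<noteq> 0 \<and> disjoint_bits (a(l := a l - 1)) I"
  using assms by (simp add: multinom_hat_def odd_multinom_iff)

lemma two_pow_dvd_iff_bits: "(2::nat) ^ n dvd x \<longleftrightarrow> (\<forall>b<n. \<not> bit x b)"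
  by (simp add: take_bit_eq_0_iff [symmetric] bit_eq_iff bit_take_bit_iff)

lemma exists_lowest_bit:
  assumes "(x::nat) \<noteq> 0"
  obtains t where "bit x t" "\<forall>b<t. \<not> bit x b"
proof -
  obtain n where "bit x n"
    using assms bit_eq_iff[of x 0] by auto
  then show ?thesis
    using that exists_least_iff[of "bit x"] by blast
qed

lemma bit_diff_one_iff:
  assumes "bit (x::nat) t" "\<forall>b<t. \<not> bit x b"
  shows "bit (x - 1) b \<longleftrightarrow> b < t \<or> (t < b \<and> bit x b)"
  using assms
proof (induction t arbitrary: x b)
  case 0
  then have "(x - 1) div 2 = x div 2"
    by (simp add: bit_0) presburger
  then show ?case
    using 0 by (cases b) (simp_all add: bit_0 bit_Suc)
next
  case (Suc t)
  then have "even x" "x \<noteq> 0"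
    by (auto simp: bit_0 intro: ccontr)
  then have half: "(x - 1) div 2 = x div 2 - 1" "odd (x - 1)"
    by presburger+
  have IH: "bit (x div 2 - 1) c \<longleftrightarrow> c < t \<or> (t < c \<and> bit (x div 2) c)" for c
    using Suc.prems by (intro Suc.IH) (auto simp: bit_Suc)
  show ?case
    using half IH[of "b - 1"] by (cases b) (simp_all add: bit_0 bit_Suc)
qed

lemma disjoint_bits_decrement_iff:
  assumes "l \<in> I" "bit (a l) t" and low: "\<forall>i\<in>I. \<forall>b<t. \<not> bit (a i) b"
  shows "disjoint_bits (a(l := a l - 1)) I \<longleftrightarrow>
    (\<forall>b. \<forall>i\<in>I. \<forall>j\<in>I. bit (a i) b \<longrightarrow> bit (a j) b \<longrightarrow> i = j \<or> (b = t \<and> l \<in> {i, j}))"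
    (is "disjoint_bits ?a' I \<longleftrightarrow> ?overlap")
proof -
  have dec: "bit (a l - 1) b \<longleftrightarrow> b < t \<or> (t < b \<and> bit (a l) b)" for b
    using assms by (intro bit_diff_one_iff) auto
  have shared_with_l: "bit (?a' l) b \<longleftrightarrow> bit (a l) b \<and> b \<noteq> t"
    if "j \<in> I" "bit (a j) b" for j b
    using that low dec[of b] by (auto simp: not_less)
  show ?thesis
  proof
    assume disj: "disjoint_bits ?a' I"
    show ?overlap
    proof (intro allI ballI impI)
      fix b i j
      assume "i \<in> I" "j \<in> I" "bit (a i) b" "bit (a j) b"
      with disj shared_with_l[of i b] shared_with_l[of j b] show "i = j \<or> (b = t \<and> l \<in> {i, j})"
        unfolding disjoint_bits_def by (metis fun_upd_other insert_iff)
    qed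
  next
    assume overlap: ?overlap
    show "disjoint_bits ?a' I"
      unfolding disjoint_bits_def
    proof (intro allI ballI impI)
      fix b i j
      assume "i \<in> I" "j \<in> I" "bit (?a' i) b" "bit (?a' j) b"
      then show "i = j"
        using overlap shared_with_l[of i b] shared_with_l[of j b]
        by (cases "i = l"; cases "j = l") auto
    qed
  qed
qed

lemma bit_imp_nonzero: "bit (x::nat) n \<Longrightarrow> x \<noteq> 0"
  by (metis bit_0_eq bot_apply bot_bool_def)

lemma bit_of_disjoint_bits_decrement:
  assumes "disjoint_bits (a(l := a l - 1)) I" "a l \<noteq> 0" "l \<in> I"
    and "i \<in> I" "i \<noteq> l" "bit (a i) p" "\<forall>b<p. \<not> bit (a l) b"
  shows "bit (a l) p"
proof (rule ccontr)
  assume "\<not> bit (a l) p"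
  obtain t where t: "bit (a l) t" "\<forall>b<t. \<not> bit (a l) b"
    using assms(2) exists_lowest_bit by blast
  with assms(7) \<open>\<not> bit (a l) p\<close> have "p < t"
    by (metis linorder_neqE_nat)
  then have "bit (a l - 1) p"
    using t bit_diff_one_iff by blast
  then show False
    using assms unfolding disjoint_bits_def by (metis fun_upd_other fun_upd_same)
qed

lemma decrement_keeps_disjoint_iff_bit:
  assumes disj: "disjoint_bits a I" and low: "\<forall>i\<in>I. \<forall>b<p. \<not> bit (a i) b"
    and "l \<in> I" "bit (a l) p" "l' \<in> I"
  shows "a l' \<noteq> 0 \<and> disjoint_bits (a(l' := a l' - 1)) I \<longleftrightarrow> bit (a l') p"
proof
  assume "a l' \<noteq> 0 \<and> disjoint_bits (a(l' := a l' - 1)) I"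
  then show "bit (a l') p"
    using bit_of_disjoint_bits_decrement[of a l' I l p] assms by (cases "l = l'") auto
next
  assume "bit (a l') p"
  moreover from this have "a l' \<noteq> 0"
    by (rule bit_imp_nonzero)
  ultimately show "a l' \<noteq> 0 \<and> disjoint_bits (a(l' := a l' - 1)) I"
    using disjoint_bits_decrement_iff[of l' I a p] assms unfolding disjoint_bits_def by blast
qed

lemma decrement_restores_disjoint_iff_bit:
  assumes not_disj: "\<not> disjoint_bits a I" and "j \<in> I" "a j \<noteq> 0"
    and disj_j: "disjoint_bits (a(j := a j - 1)) I"
    and low: "\<forall>i\<in>I. \<forall>b<p. \<not> bit (a i) b" and "\<exists>i\<in>I. bit (a i) p"
  shows "\<exists>!l. l \<in> I - {j} \<and> bit (a l) p"
    and "\<forall>l\<in>I - {j}. a l \<noteq> 0 \<and> disjoint_bits (a(l := a l - 1)) I \<longleftrightarrow> bit (a l) p"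
proof -
  have "bit (a j) p"
    using assms bit_of_disjoint_bits_decrement[of a j I] by metis
  then have overlap_j: "\<And>b i i'. \<lbrakk>i \<in> I; i' \<in> I; bit (a i) b; bit (a i') b\<rbrakk>
      \<Longrightarrow> i = i' \<or> (b = p \<and> j \<in> {i, i'})"
    using disjoint_bits_decrement_iff[of j I a p] disj_j assms by blast
  obtain l where l: "l \<in> I - {j}" "bit (a l) p"
    using not_disj overlap_j unfolding disjoint_bits_def by blast
  have unique: "l' = l" if "l' \<in> I - {j}" "bit (a l') p" for l'
    using overlap_j[of l' l p] that l by blast
  show "\<exists>!l. l \<in> I - {j} \<and> bit (a l) p"
    using l unique by blast
  have overlap_l: "i = i' \<or> (b = p \<and> l \<in> {i, i'})"
    if "i \<in> I" "i' \<in> I" "bit (a i) b" "bit (a i') b" for b i i'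
    using overlap_j[OF that] unique that by blast
  have disj_l: "disjoint_bits (a(l := a l - 1)) I"
    using disjoint_bits_decrement_iff[of l I a p] l low overlap_l by blast
  show "\<forall>l'\<in>I - {j}. a l' \<noteq> 0 \<and> disjoint_bits (a(l' := a l' - 1)) I \<longleftrightarrow> bit (a l') p"
  proof
    fix l' assume l': "l' \<in> I - {j}"
    show "a l' \<noteq> 0 \<and> disjoint_bits (a(l' := a l' - 1)) I \<longleftrightarrow> bit (a l') p"
    proof
      assume "a l' \<noteq> 0 \<and> disjoint_bits (a(l' := a l' - 1)) I"
      then show "bit (a l') p"
        using bit_of_disjoint_bits_decrement[of a l' I j p] \<open>bit (a j) p\<close> \<open>j \<in> I\<close> l' low by blast
    next
      assume "bit (a l') p"
      then have "l' = l" "a l' \<noteq> 0"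
        using unique l' bit_imp_nonzero by blast+
      then show "a l' \<noteq> 0 \<and> disjoint_bits (a(l' := a l' - 1)) I"
        using disj_l by simp
    qed
  qed
qed

lemma pow2_dvd_bits:
  assumes "2 ^ p dvd (x::nat)"
  shows "\<forall>b<p. \<not> bit x b" and "\<not> 2 ^ (p + 1) dvd x \<longleftrightarrow> bit x p"
  using assms two_pow_dvd_iff_bits[of p x] two_pow_dvd_iff_bits[of "p + 1" x]
  by (auto simp: less_Suc_eq)

lemma odd_multinom_hat_iff_of_odd_multinom:
  assumes "finite I" "odd (multinom a I)"
    and p_div: "\<forall>i\<in>I. 2 ^ p dvd a i" and "\<exists>i\<in>I. \<not> 2 ^ (p + 1) dvd a i"
  shows "\<exists>!l. l \<in> I \<and> \<not> 2 ^ (p + 1) dvd a l"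
    and "\<forall>l\<in>I. odd (multinom_hat a I l) \<longleftrightarrow> \<not> 2 ^ (p + 1) dvd a l"
proof -
  have disj: "disjoint_bits a I"
    using assms odd_multinom_iff by blast
  have low: "\<forall>i\<in>I. \<forall>b<p. \<not> bit (a i) b"
    using p_div pow2_dvd_bits(1) by blast
  have top_bit: "\<not> 2 ^ (p + 1) dvd a i \<longleftrightarrow> bit (a i) p" if "i \<in> I" for i
    using p_div that pow2_dvd_bits(2) by blast
  obtain l where l: "l \<in> I" "bit (a l) p"
    using assms(4) top_bit by blast
  have "l' = l" if "l' \<in> I" "bit (a l') p" for l'
    using disj l that unfolding disjoint_bits_def by blast
  then show "\<exists>!l. l \<in> I \<and> \<not> 2 ^ (p + 1) dvd a l"
    using l top_bit by blast
  show "\<forall>l'\<in>I. odd (multinom_hat a I l') \<longleftrightarrow> \<not> 2 ^ (p + 1) dvd a l'"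
    using decrement_keeps_disjoint_iff_bit[OF disj low l] odd_multinom_hat_iff[OF assms(1)] top_bit
    by blast
qed

lemma odd_multinom_hat_iff_of_even_multinom:
  assumes "finite I" "even (multinom a I)" "j \<in> I" "odd (multinom_hat a I j)"
    and p_div: "\<forall>i\<in>I. 2 ^ p dvd a i" and "\<exists>i\<in>I. \<not> 2 ^ (p + 1) dvd a i"
  shows "\<exists>!l. l \<in> I - {j} \<and> \<not> 2 ^ (p + 1) dvd a l"
    and "\<forall>l\<in>I - {j}. odd (multinom_hat a I l) \<longleftrightarrow> \<not> 2 ^ (p + 1) dvd a l"
proof -
  have low: "\<forall>i\<in>I. \<forall>b<p. \<not> bit (a i) b"
    using p_div pow2_dvd_bits(1) by blast
  have top_bit: "\<not> 2 ^ (p + 1) dvd a i \<longleftrightarrow> bit (a i) p" if "i \<in> I" for i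
    using p_div that pow2_dvd_bits(2) by blast
  have "\<not> disjoint_bits a I"
    using assms(2) odd_multinom_iff[OF assms(1)] by blast
  moreover have "a j \<noteq> 0" "disjoint_bits (a(j := a j - 1)) I"
    using assms(4) odd_multinom_hat_iff[OF assms(1)] by blast+
  moreover have "\<exists>i\<in>I. bit (a i) p"
    using assms(6) top_bit by blast
  ultimately have "\<exists>!l. l \<in> I - {j} \<and> bit (a l) p"
    and restore: "\<forall>l\<in>I - {j}. a l \<noteq> 0 \<and> disjoint_bits (a(l := a l - 1)) I \<longleftrightarrow> bit (a l) p"
    using decrement_restores_disjoint_iff_bit[OF _ assms(3) _ _ low] by simp_all
  then show "\<exists>!l. l \<in> I - {j} \<and> \<not> 2 ^ (p + 1) dvd a l"
    using top_bit by (metis DiffD1)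
  show "\<forall>l\<in>I - {j}. odd (multinom_hat a I l) \<longleftrightarrow> \<not> 2 ^ (p + 1) dvd a l"
    using restore odd_multinom_hat_iff[OF assms(1)] top_bit by blast
qed

text \<open>The hypothesis \<open>nonzero\<close> is implied by \<open>p_max\<close>.\<close>

theorem mainTheorem6:
  fixes a :: "nat \<Rightarrow> nat" and k p :: nat
  defines "I \<equiv> {2..k}"
  assumes nonzero: "\<exists>i\<in>I. a i \<noteq> 0"
    and p_div: "\<forall>i\<in>I. 2 ^ p dvd a i"
    and p_max: "\<not> (\<forall>i\<in>I. 2 ^ (p + 1) dvd a i)"
  shows "(odd (multinom a I) \<longrightarrow>
            (\<exists>!l. l \<in> I \<and> odd (multinom_hat a I l)) \<and>
            (\<exists>!l. l \<in> I \<and> \<not> 2 ^ (p + 1) dvd a l) \<and>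
            (\<forall>l\<in>I. odd (multinom_hat a I l) \<longleftrightarrow> \<not> 2 ^ (p + 1) dvd a l))
       \<and> (\<forall>j\<in>I. even (multinom a I) \<and> odd (multinom_hat a I j) \<longrightarrow>
            (\<exists>!l. l \<in> I \<and> l \<noteq> j \<and> odd (multinom_hat a I l)) \<and>
            (\<exists>!l. l \<in> I \<and> l \<noteq> j \<and> \<not> 2 ^ (p + 1) dvd a l) \<and>
            (\<forall>l\<in>I - {j}. odd (multinom_hat a I l) \<longleftrightarrow> \<not> 2 ^ (p + 1) dvd a l))"
proof -
  have fin: "finite I"
    unfolding I_def by simp
  have p_top: "\<exists>i\<in>I. \<not> 2 ^ (p + 1) dvd a i"
    using p_max by blast
  have part1: "odd (multinom a I) \<longrightarrow>
      (\<exists>!l. l \<in> I \<and> odd (multinom_hat a I l)) \<and>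
      (\<exists>!l. l \<in> I \<and> \<not> 2 ^ (p + 1) dvd a l) \<and>
      (\<forall>l\<in>I. odd (multinom_hat a I l) \<longleftrightarrow> \<not> 2 ^ (p + 1) dvd a l)"
    (is "_ \<longrightarrow> ?part1")
  proof
    assume "odd (multinom a I)"
    note parity = odd_multinom_hat_iff_of_odd_multinom[OF fin this p_div p_top]
    then have "l \<in> I \<and> odd (multinom_hat a I l) \<longleftrightarrow> l \<in> I \<and> \<not> 2 ^ (p + 1) dvd a l" for l
      by blast
    with parity show ?part1
      by simp
  qed
  have part2: "\<forall>j\<in>I. even (multinom a I) \<and> odd (multinom_hat a I j) \<longrightarrow>
      (\<exists>!l. l \<in> I \<and> l \<noteq> j \<and> odd (multinom_hat a I l)) \<and>
      (\<exists>!l. l \<in> I \<and> l \<noteq> j \<and> \<not> 2 ^ (p + 1) dvd a l) \<and>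
      (\<forall>l\<in>I - {j}. odd (multinom_hat a I l) \<longleftrightarrow> \<not> 2 ^ (p + 1) dvd a l)"
    (is "\<forall>j\<in>I. _ \<longrightarrow> ?part2 j")
  proof (intro ballI impI)
    fix j assume j: "j \<in> I" and parities: "even (multinom a I) \<and> odd (multinom_hat a I j)"
    note parity = odd_multinom_hat_iff_of_even_multinom[OF fin conjunct1[OF parities] j
        conjunct2[OF parities] p_div p_top]
    then have "l \<in> I \<and> l \<noteq> j \<and> odd (multinom_hat a I l) \<longleftrightarrow> l \<in> I - {j} \<and> \<not> 2 ^ (p + 1) dvd a l"
      for l by blast
    with parity show "?part2 j"
      by simp
  qed
  from part1 part2 show ?thesis ..
qed

end
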